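(* Let $V$ be a finite-dimensional vector space over $k$ with basis $\xi_1,\dots,\xi_n$ and dual basis $\eta_1,\dots,\eta_n$ of $V^*$, and let $\mathfrak a=\mathfrak a(V\oplus V^* )$ be the Weyl Lie algebra. Let $M$ be a vector space, $\mu:\mathfrak a\otimes M\to M$ linear, and let $a:\mathrm{Sym}(V)\otimes M\to\mathrm{Div}(V)\otimes M$ be the corresponding map $a(\xi^\alpha\otimes x)=\sum_\sigma\xi^{[\sigma]}\otimes\mu(\xi^\alpha\eta^\sigma\otimes x)$ (assumed to have finitely many nonzero terms for each $x$). Then $\mu$ defines a representation of the Lie algebra $\mathfrak a$ on $M$ if and only if $[a_1,a_2]=a'-a''$.
   Context: The Weyl algebra $A$ is generated by $\xi_1,\dots,\xi_n,\eta_1,\dots,\eta_n$ with relations $\xi_i\xi_j=\xi_j\xi_i$, $\eta_i\eta_j=\eta_j\eta_i$, $\eta_i\xi_j-\xi_j\eta_i=\delta_{ij}$; the Weyl Lie algebra $\mathfrak a$ is $A$ with the commutator bracket; it has basis the ordered monomials $\xi^\alpha\eta^\sigma=\xi_1^{\alpha_1}\cdots\xi_n^{\alpha_n}\eta_1^{\sigma_1}\cdots\eta_n^{\sigma_n}$ ($\alpha,\sigma\in\mathbb N^n$). $\mathrm{Sym}(V)=k[\xi_1,\dots,\xi_n]$; $\mathrm{Div}(V)$ is the divided power algebra with basis $\xi^{[\sigma]}$, multiplication $\xi^{[\nu]}\xi^{[\mu]}=\binom{\nu+\mu}{\nu}\xi^{[\nu+\mu]}$ and comultiplication $\Delta(\xi^{[\rho]})=\sum_{\nu+\mu=\rho}\xi^{[\nu]}\otimes\xi^{[\mu]}$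 (multi-index binomials are products of coordinatewise ones); on $\mathrm{Sym}(V)$, $m$ is multiplication and $\Delta(\xi^\beta)=\sum_\epsilon\binom{\beta}{\epsilon}\xi^\epsilon\otimes\xi^{\beta-\epsilon}$; $\mathrm{avg}:\mathrm{Sym}(V)\to\mathrm{Div}(V)$, $\xi^\epsilon\mapsto\epsilon!\,\xi^{[\epsilon]}$ with $\epsilon!=\prod\epsilon_i!$. Write $S=\mathrm{Sym}(V)$, $D=\mathrm{Div}(V)$, $\tau$ the symmetry of the first two factors. $a_2=\mathrm{id}_S\otimes a$, $a_1=\tau(\mathrm{id}_S\otimes a)\tau$, and $[a_1,a_2]=a_1a_2-a_2a_1:S\otimes S\otimes M\to D\otimes D\otimes M$. $a'$ is the composite $S\otimes S\otimes M\xrightarrow{\mathrm{id}\otimes\Delta\otimes\mathrm{id}}S^{\otimes3}\otimes M\xrightarrow{\tau\otimes\mathrm{id}\otimes\mathrm{id}}S^{\otimes3}\otimes M\xrightarrow{\mathrm{id}\otimes m\otimes\mathrm{id}}S\otimes S\otimes M\xrightarrow{\mathrm{id}\otimes a}S\otimes D\otimes M\xrightarrow{\mathrm{id}\otimes\Delta\otimes\mathrm{id}}S\otimes D\otimes D\otimes M\xrightarrow{\mathrm{avg}\otimes\mathrm{id}}D^{\otimes3}\otimes M\xrightarrow{m\otimes\mathrm{id}\otimes\mathrm{id}}D\otimes D\otimes M$, and $a''=\tau a'\tau$. A representation means $\mu([X,Y]\otimes x)=\mu(X\otimes\mu(Y\otimes x))-\mu(Y\otimes\mu(X\otimes x))$.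 *)

theory Defs
  imports Complex_Main
begin

(* Multi-indices in N^n, with the index set {1..n} modelled by a finite type 'n. *)
type_synonym 'n mi = "'n \<Rightarrow> nat"

definition madd :: "'n mi \<Rightarrow> 'n mi \<Rightarrow> 'n mi" where
  "madd a b = (\<lambda>i. a i + b i)"

definition mbinom :: "('n::finite) mi \<Rightarrow> 'n mi \<Rightarrow> nat" where
  "mbinom a b = (\<Prod>i\<in>UNIV. a i choose b i)"

definition mfact :: "('n::finite) mi \<Rightarrow> nat" where
  "mfact e = (\<Prod>i\<in>UNIV. fact (e i))"

(* Structure constants of the Weyl algebra in the basis of ordered monomials xi^a eta^s:
   (xi^a eta^s)(xi^b eta^t) = sum_{e <= s, e <= b} e! C(s,e) C(b,e) xi^(a+b-e) eta^(s+t-e).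
   weyl_coeff a s b t g r is the coefficient of xi^g eta^r in that product. *)
definition weyl_coeff :: "('n::finite) mi \<Rightarrow> 'n mi \<Rightarrow> 'n mi \<Rightarrow> 'n mi \<Rightarrow> 'n mi \<Rightarrow> 'n mi \<Rightarrow> 'k::field" where
  "weyl_coeff a s b t g r =
     (\<Sum>e\<in>{e. e \<le> s \<and> e \<le> b \<and> madd a b = madd g e \<and> madd s t = madd r e}.
        of_nat (mfact e * mbinom s e * mbinom b e))"

(* An element X of the Weyl algebra: X a s is the coefficient of xi^a eta^s; finitely supported. *)
definition wsupp :: "('n mi \<Rightarrow> 'n mi \<Rightarrow> 'k::zero) \<Rightarrow> ('n mi \<times> 'n mi) set" where
  "wsupp X = {(a, s). X a s \<noteq> 0}"

definition weyl_mult :: "(('n::finite) mi \<Rightarrow> 'n mi \<Rightarrow> 'k::field) \<Rightarrow> ('n mi \<Rightarrow> 'n mi \<Rightarrow> 'k)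
    \<Rightarrow> ('n mi \<Rightarrow> 'n mi \<Rightarrow> 'k)" where
  "weyl_mult X Y = (\<lambda>g r. \<Sum>(a, s)\<in>wsupp X. \<Sum>(b, t)\<in>wsupp Y.
        X a s * Y b t * weyl_coeff a s b t g r)"

definition weyl_bracket :: "(('n::finite) mi \<Rightarrow> 'n mi \<Rightarrow> 'k::field) \<Rightarrow> ('n mi \<Rightarrow> 'n mi \<Rightarrow> 'k)
    \<Rightarrow> ('n mi \<Rightarrow> 'n mi \<Rightarrow> 'k)" where
  "weyl_bracket X Y = (\<lambda>g r. weyl_mult X Y g r - weyl_mult Y X g r)"

(* The linear map mu : a (x) M -> M, given by mu a s = mu(xi^a eta^s (x) -), extended linearly. *)
definition weyl_act :: "('k \<Rightarrow> 'm \<Rightarrow> 'm) \<Rightarrow> ('n mi \<Rightarrow> 'n mi \<Rightarrow> 'm \<Rightarrow> 'm)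
    \<Rightarrow> ('n mi \<Rightarrow> 'n mi \<Rightarrow> 'k::zero) \<Rightarrow> 'm \<Rightarrow> 'm::comm_monoid_add" where
  "weyl_act scale mu X x = (\<Sum>(a, s)\<in>wsupp X. scale (X a s) (mu a s x))"

definition is_representation :: "('k::field \<Rightarrow> 'm::ab_group_add \<Rightarrow> 'm) \<Rightarrow> (('n::finite) mi \<Rightarrow> 'n mi \<Rightarrow> 'm \<Rightarrow> 'm)
    \<Rightarrow> bool" where
  "is_representation scale mu \<longleftrightarrow>
     (\<forall>X Y x. finite (wsupp X) \<longrightarrow> finite (wsupp Y) \<longrightarrow>
        weyl_act scale mu (weyl_bracket X Y) x
          = weyl_act scale mu X (weyl_act scale mu Y x) - weyl_act scale mu Y (weyl_act scale mu X x))"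

(* An element of B1 (x) ... (x) Bk (x) M (Bi in {Sym, Div}) is represented by the finitely
   supported function F with  sum F a1 ... ak  standing for  sum xi^(a1) (x) ... (x) xi^(ak) (x) F a1..ak
   (with divided-power basis vectors in the Div slots). *)

definition amap :: "('n mi \<Rightarrow> 'n mi \<Rightarrow> 'm \<Rightarrow> 'm) \<Rightarrow> ('n mi \<Rightarrow> 'm::{zero,comm_monoid_add})
    \<Rightarrow> ('n mi \<Rightarrow> 'm)" where
  "amap mu F = (\<lambda>s. \<Sum>a\<in>{a. F a \<noteq> 0}. mu a s (F a))"

definition swap12 :: "('a \<Rightarrow> 'b \<Rightarrow> 'c) \<Rightarrow> ('b \<Rightarrow> 'a \<Rightarrow> 'c)" where
  "swap12 F = (\<lambda>i j. F j i)"

definition a2 :: "('n mi \<Rightarrow> 'n mi \<Rightarrow> 'm \<Rightarrow> 'm) \<Rightarrow> ('n mi \<Rightarrow> 'n mi \<Rightarrow> 'm::comm_monoid_add)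
    \<Rightarrow> ('n mi \<Rightarrow> 'n mi \<Rightarrow> 'm)" where
  "a2 mu F = (\<lambda>i. amap mu (F i))"

definition a1 :: "('n mi \<Rightarrow> 'n mi \<Rightarrow> 'm \<Rightarrow> 'm) \<Rightarrow> ('n mi \<Rightarrow> 'n mi \<Rightarrow> 'm::comm_monoid_add)
    \<Rightarrow> ('n mi \<Rightarrow> 'n mi \<Rightarrow> 'm)" where
  "a1 mu F = swap12 (a2 mu (swap12 F))"

definition comm_a1a2 :: "('n mi \<Rightarrow> 'n mi \<Rightarrow> 'm \<Rightarrow> 'm) \<Rightarrow> ('n mi \<Rightarrow> 'n mi \<Rightarrow> 'm::ab_group_add)
    \<Rightarrow> ('n mi \<Rightarrow> 'n mi \<Rightarrow> 'm)" where
  "comm_a1a2 mu F = (\<lambda>i j. a1 mu (a2 mu F) i j - a2 mu (a1 mu F) i j)"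

(* id (x) Delta_Sym (x) id : S (x) S (x) M -> S (x) S (x) S (x) M,
   Delta(xi^b) = sum_e C(b,e) xi^e (x) xi^(b-e) *)
definition id_DeltaS_id :: "('k::field \<Rightarrow> 'm \<Rightarrow> 'm) \<Rightarrow> (('n::finite) mi \<Rightarrow> 'n mi \<Rightarrow> 'm)
    \<Rightarrow> ('n mi \<Rightarrow> 'n mi \<Rightarrow> 'n mi \<Rightarrow> 'm)" where
  "id_DeltaS_id scale F = (\<lambda>a e d. scale (of_nat (mbinom (madd e d) e)) (F a (madd e d)))"

definition swap12_3 :: "('a \<Rightarrow> 'b \<Rightarrow> 'c \<Rightarrow> 'd) \<Rightarrow> ('b \<Rightarrow> 'a \<Rightarrow> 'c \<Rightarrow> 'd)" where
  "swap12_3 F = (\<lambda>i j k. F j i k)"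

(* id (x) m_Sym (x) id : S (x) S (x) S (x) M -> S (x) S (x) M,  xi^a xi^d = xi^(a+d) *)
definition id_mS_id :: "('n mi \<Rightarrow> 'n mi \<Rightarrow> 'n mi \<Rightarrow> 'm::comm_monoid_add) \<Rightarrow> ('n mi \<Rightarrow> 'n mi \<Rightarrow> 'm)" where
  "id_mS_id F = (\<lambda>e g. \<Sum>(a, d)\<in>{(a, d). madd a d = g}. F e a d)"

(* id (x) Delta_Div (x) id : S (x) D (x) M -> S (x) D (x) D (x) M,
   Delta(xi^[r]) = sum_{v+l=r} xi^[v] (x) xi^[l] *)
definition id_DeltaD_id :: "('n mi \<Rightarrow> 'n mi \<Rightarrow> 'm) \<Rightarrow> ('n mi \<Rightarrow> 'n mi \<Rightarrow> 'n mi \<Rightarrow> 'm)" where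
  "id_DeltaD_id F = (\<lambda>e v l. F e (madd v l))"

(* avg (x) id : S (x) D (x) D (x) M -> D (x) D (x) D (x) M,  xi^e |-> e! xi^[e] *)
definition avg_id :: "('k::field \<Rightarrow> 'm \<Rightarrow> 'm) \<Rightarrow> (('n::finite) mi \<Rightarrow> 'n mi \<Rightarrow> 'n mi \<Rightarrow> 'm)
    \<Rightarrow> ('n mi \<Rightarrow> 'n mi \<Rightarrow> 'n mi \<Rightarrow> 'm)" where
  "avg_id scale F = (\<lambda>e v l. scale (of_nat (mfact e)) (F e v l))"

(* m_Div (x) id (x) id : D (x) D (x) D (x) M -> D (x) D (x) M,
   xi^[e] xi^[v] = C(e+v, e) xi^[e+v] *)
definition mD_id_id :: "('k::field \<Rightarrow> 'm \<Rightarrow> 'm) \<Rightarrow> (('n::finite) mi \<Rightarrow> 'n mi \<Rightarrow> 'n mi \<Rightarrow> 'm::comm_monoid_add)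
    \<Rightarrow> ('n mi \<Rightarrow> 'n mi \<Rightarrow> 'm)" where
  "mD_id_id scale F = (\<lambda>r l. \<Sum>(e, v)\<in>{(e, v). madd e v = r}. scale (of_nat (mbinom r e)) (F e v l))"

definition a_prime :: "('k::field \<Rightarrow> 'm \<Rightarrow> 'm) \<Rightarrow> (('n::finite) mi \<Rightarrow> 'n mi \<Rightarrow> 'm \<Rightarrow> 'm)
    \<Rightarrow> ('n mi \<Rightarrow> 'n mi \<Rightarrow> 'm::comm_monoid_add) \<Rightarrow> ('n mi \<Rightarrow> 'n mi \<Rightarrow> 'm)" where
  "a_prime scale mu F =
     mD_id_id scale (avg_id scale (id_DeltaD_id (a2 mu (id_mS_id (swap12_3 (id_DeltaS_id scale F))))))"

definition a_dprime :: "('k::field \<Rightarrow> 'm \<Rightarrow> 'm) \<Rightarrow> (('n::finite) mi \<Rightarrow> 'n mi \<Rightarrow> 'm \<Rightarrow> 'm)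
    \<Rightarrow> ('n mi \<Rightarrow> 'n mi \<Rightarrow> 'm::comm_monoid_add) \<Rightarrow> ('n mi \<Rightarrow> 'n mi \<Rightarrow> 'm)" where
  "a_dprime scale mu F = swap12 (a_prime scale mu (swap12 F))"

end

theory Submission
  imports Defs "HOL-Library.Function_Algebras" "HOL-Library.FuncSet"
begin

text \<open>
  On ordered monomials the Weyl algebra multiplies by normal ordering,
  \<open>(\<xi>\<^sup>a \<eta>\<^sup>s)(\<xi>\<^sup>b \<eta>\<^sup>t) = \<Sum>\<^sub>e e! C(s,e) C(b,e) \<xi>\<^bsup>a+b-e\<^esup> \<eta>\<^bsup>s+t-e\<^esup>\<close>.
  Both conditions are linear, so they may be tested on monomials and on pure tensors
  \<open>\<xi>\<^sup>a \<otimes> \<xi>\<^sup>b \<otimes> x\<close>, and both reduce to the same identity: the commutator of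
  \<open>\<mu>(\<xi>\<^sup>a \<eta>\<^sup>s)\<close> and \<open>\<mu>(\<xi>\<^sup>b \<eta>\<^sup>t)\<close> equals \<open>\<mu>\<close> of the product minus \<open>\<mu>\<close> of the reversed
  product. For \<open>[a\<^sub>1, a\<^sub>2]\<close> the commutator is visible directly; in \<open>a'\<close> the coproduct of
  \<open>Sym(V)\<close> supplies \<open>C(b,e)\<close>, the averaging map \<open>e!\<close> and the product of \<open>Div(V)\<close>
  \<open>C(s,e)\<close>, so that \<open>a'\<close> produces \<open>\<mu>\<close> of the product and \<open>a''\<close> that of the reversed one.
\<close>

lemma madd_eq_plus: "madd a b = a + b"
  by (simp add: madd_def plus_fun_def)

lemma finite_atMost_mi: "finite {..c :: 'n::finite mi}"
proof -
  have "{..c} \<subseteq> Pi\<^sub>E UNIV (\<lambda>i. {..c i})"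
    by (auto simp: PiE_UNIV_domain le_fun_def)
  then show ?thesis
    by (rule finite_subset) (simp add: finite_PiE)
qed

lemma finite_plus_eq_mi: "finite {(a, d). a + d = (g :: 'n::finite mi)}"
proof (rule finite_subset)
  show "{(a, d). a + d = g} \<subseteq> {..g} \<times> {..g}"
    by (auto simp: le_fun_def)
qed (simp add: finite_atMost_mi)

lemma mbinom_eq_0: "\<not> e \<le> b \<Longrightarrow> mbinom b e = 0"
  unfolding mbinom_def le_fun_def by (auto simp: not_le intro!: prod_zero)

lemma mi_diff_add: "e \<le> b \<Longrightarrow> b - e + e = (b :: 'n mi)"
  by (auto simp: fun_eq_iff le_fun_def)

lemma mi_diff_add_assoc: "e \<le> b \<Longrightarrow> b - e + a = b + a - (e :: 'n mi)"
  by (auto simp: fun_eq_iff le_fun_def)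

lemma mi_add_eq_iff: "(e + v = r) = (e \<le> r \<and> v = r - (e :: 'n mi))"
  using add_diff_cancel_left'[of e v] mi_diff_add[of e r]
  by (auto simp: le_fun_def add.commute)

lemma mi_eq_diff_iff: "e \<le> b \<Longrightarrow> (b = g + e) = (g = b - (e :: 'n mi))"
  by (auto simp: fun_eq_iff le_fun_def)

lemma weyl_coeff_eq:
  "weyl_coeff a s b t g r =
     (\<Sum>e\<in>{..s}. if g = a + b - e \<and> r = s + t - e
        then of_nat (mfact e * mbinom s e * mbinom b e) else 0)" (is "_ = ?rhs")
proof -
  have "weyl_coeff a s b t g r =
      (\<Sum>e\<in>{..s}. if e \<le> b \<and> a + b = g + e \<and> s + t = r + e
         then of_nat (mfact e * mbinom s e * mbinom b e) else 0)"
    unfolding weyl_coeff_def madd_eq_plus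
    by (subst sum.inter_filter[symmetric]) (auto simp: finite_atMost_mi intro: sum.cong)
  also have "\<dots> = ?rhs"
  proof (rule sum.cong[OF refl], goal_cases)
    case (1 e)
    show ?case
    proof (cases "e \<le> b")
      case True
      with 1 have "e \<le> a + b" "e \<le> s + t"
        by (auto simp: le_fun_def intro: trans_le_add1 trans_le_add2)
      with True show ?thesis
        by (simp add: mi_eq_diff_iff)
    qed (simp add: mbinom_eq_0)
  qed
  finally show ?thesis .
qed

lemma weyl_coeff_nonzero_le:
  assumes "weyl_coeff a s b t g r \<noteq> 0"
  shows "g \<le> a + b \<and> r \<le> s + t"
proof -
  obtain e where "g = a + b - e" "r = s + t - e"
    using assms unfolding weyl_coeff_eq
    by (elim sum.not_neutral_contains_not_neutral) (auto split: if_splits)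
  then show ?thesis by (auto simp: le_fun_def)
qed

definition weyl_monomial :: "'n mi \<Rightarrow> 'n mi \<Rightarrow> 'n mi \<Rightarrow> 'n mi \<Rightarrow> 'k::zero_neq_one" where
  "weyl_monomial a s = (\<lambda>a' s'. if a' = a \<and> s' = s then 1 else 0)"

lemma wsupp_weyl_monomial: "wsupp (weyl_monomial a s) = {(a, s)}"
  by (auto simp: wsupp_def weyl_monomial_def)

definition weyl_mult_bound ::
    "('n mi \<Rightarrow> 'n mi \<Rightarrow> 'k::zero) \<Rightarrow> ('n mi \<Rightarrow> 'n mi \<Rightarrow> 'k) \<Rightarrow> ('n mi \<times> 'n mi) set" where
  "weyl_mult_bound X Y = (\<Union>(a, s)\<in>wsupp X. \<Union>(b, t)\<in>wsupp Y. {..a + b} \<times> {..s + t})"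

lemma finite_weyl_mult_bound:
  "finite (wsupp X) \<Longrightarrow> finite (wsupp Y) \<Longrightarrow> finite (weyl_mult_bound (X :: 'n::finite mi \<Rightarrow> _) Y)"
  by (auto simp: weyl_mult_bound_def finite_atMost_mi)

lemma box_subset_weyl_mult_bound:
  "(a, s) \<in> wsupp X \<Longrightarrow> (b, t) \<in> wsupp Y \<Longrightarrow> {..a + b} \<times> {..s + t} \<subseteq> weyl_mult_bound X Y"
  unfolding weyl_mult_bound_def by blast

lemma weyl_mult_bound_commute: "weyl_mult_bound Y X = weyl_mult_bound X Y"
  unfolding weyl_mult_bound_def by (fastforce simp: add.commute)

lemma wsupp_weyl_mult_subset:
  fixes X Y :: "'n::finite mi \<Rightarrow> 'n mi \<Rightarrow> 'k::field"
  shows "wsupp (weyl_mult X Y) \<subseteq> weyl_mult_bound X Y"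
proof safe
  fix g r assume "(g, r) \<in> wsupp (weyl_mult X Y)"
  then obtain a s b t where "(a, s) \<in> wsupp X" "(b, t) \<in> wsupp Y"
      and "weyl_coeff a s b t g r \<noteq> (0::'k)"
    unfolding wsupp_def weyl_mult_def
    by (auto elim!: sum.not_neutral_contains_not_neutral)
  with weyl_coeff_nonzero_le show "(g, r) \<in> weyl_mult_bound X Y"
    unfolding weyl_mult_bound_def by fastforce
qed

lemma wsupp_weyl_bracket_subset:
  fixes X Y :: "'n::finite mi \<Rightarrow> 'n mi \<Rightarrow> 'k::field"
  shows "wsupp (weyl_bracket X Y) \<subseteq> weyl_mult_bound X Y"
proof -
  have "wsupp (weyl_bracket X Y) \<subseteq> wsupp (weyl_mult X Y) \<union> wsupp (weyl_mult Y X)"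
    by (auto simp: wsupp_def weyl_bracket_def)
  then show ?thesis
    using wsupp_weyl_mult_subset[of X Y] wsupp_weyl_mult_subset[of Y X]
    by (auto simp: weyl_mult_bound_commute)
qed

lemma support_swap12: "{(a, b). swap12 F a b \<noteq> 0} = prod.swap ` {(a, b). F a b \<noteq> 0}"
  by (auto simp: swap12_def image_iff)

lemma finite_support_swap12:
  "finite {(a, b). F a b \<noteq> 0} \<Longrightarrow> finite {(a, b). swap12 F a b \<noteq> 0}"
  unfolding support_swap12 by simp

lemma sum_support_swap12:
  "(\<Sum>(a, b)\<in>{(a, b). swap12 F a b \<noteq> 0}. f a b (swap12 F a b))
     = (\<Sum>(a, b)\<in>{(a, b). F a b \<noteq> 0}. f b a (F a b))"
  unfolding support_swap12 by (subst sum.reindex) (auto simp: swap12_def case_prod_unfold)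

locale weyl_action = vector_space scale
  for scale :: "'k::field \<Rightarrow> 'm::ab_group_add \<Rightarrow> 'm" +
  fixes mu :: "'n::finite mi \<Rightarrow> 'n mi \<Rightarrow> 'm \<Rightarrow> 'm"
  assumes linear_mu: "Vector_Spaces.linear scale scale (mu a s)"
begin

lemma module_hom_mu: "module_hom scale scale (mu a s)"
  using linear_mu module_hom_iff_linear by blast

lemma mu_zero [simp]: "mu a s 0 = 0"
  by (rule module_hom.zero[OF module_hom_mu])

lemma mu_sum: "mu a s (sum f A) = (\<Sum>x\<in>A. mu a s (f x))"
  by (rule module_hom.sum[OF module_hom_mu])

lemma mu_scale: "mu a s (scale c x) = scale c (mu a s x)"
  by (rule module_hom.scale[OF module_hom_mu])

text \<open>
  \<open>mu_mult a s b t x\<close> is \<open>\<mu>((\<xi>\<^sup>a \<eta>\<^sup>s)(\<xi>\<^sup>b \<eta>\<^sup>t) \<otimes> x)\<close>. The terms with \<open>e \<not>\<le> b\<close>, where the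
  truncated subtraction \<open>a + b - e\<close> would be wrong, vanish because \<open>mbinom b e = 0\<close>.
\<close>

definition mu_mult :: "'n mi \<Rightarrow> 'n mi \<Rightarrow> 'n mi \<Rightarrow> 'n mi \<Rightarrow> 'm \<Rightarrow> 'm" where
  "mu_mult a s b t x = (\<Sum>e\<in>{..s}.
     scale (of_nat (mfact e * mbinom s e * mbinom b e)) (mu (a + b - e) (s + t - e) x))"

lemma mu_mult_zero [simp]: "mu_mult a s b t 0 = 0"
  by (simp add: mu_mult_def)

lemma sum_weyl_coeff_mu:
  assumes "finite T" and "{..a + b} \<times> {..s + t} \<subseteq> T"
  shows "(\<Sum>(g, r)\<in>T. scale (weyl_coeff a s b t g r) (mu g r x)) = mu_mult a s b t x"
proof -
  define c :: "'n mi \<Rightarrow> 'k" where "c e = of_nat (mfact e * mbinom s e * mbinom b e)" for e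
  have "(\<Sum>(g, r)\<in>T. scale (weyl_coeff a s b t g r) (mu g r x))
      = (\<Sum>p\<in>T. \<Sum>e\<in>{..s}. if p = (a + b - e, s + t - e) then scale (c e) (mu (fst p) (snd p) x) else 0)"
    by (auto simp: weyl_coeff_eq scale_sum_left c_def case_prod_unfold intro!: sum.cong)
  also have "\<dots> = (\<Sum>e\<in>{..s}. \<Sum>p\<in>T. if p = (a + b - e, s + t - e) then scale (c e) (mu (fst p) (snd p) x) else 0)"
    by (rule sum.swap)
  also have "\<dots> = (\<Sum>e\<in>{..s}. scale (c e) (mu (a + b - e) (s + t - e) x))"
  proof (rule sum.cong[OF refl])
    fix e
    have "(a + b - e, s + t - e) \<in> T"
      by (rule subsetD[OF assms(2)]) (auto simp: le_fun_def)
    then show "(\<Sum>p\<in>T. if p = (a + b - e, s + t - e) then scale (c e) (mu (fst p) (snd p) x) else 0)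
        = scale (c e) (mu (a + b - e) (s + t - e) x)"
      using assms(1) by simp
  qed
  finally show ?thesis
    by (simp add: mu_mult_def c_def)
qed

lemma weyl_act_eq_sum:
  assumes "finite T" and "wsupp X \<subseteq> T"
  shows "weyl_act scale mu X x = (\<Sum>(a, s)\<in>T. scale (X a s) (mu a s x))"
  unfolding weyl_act_def using assms
  by (intro sum.mono_neutral_left) (auto simp: wsupp_def)

lemma sum_weyl_mult_mu:
  assumes "finite (wsupp X)" and "finite (wsupp Y)"
  shows "(\<Sum>(g, r)\<in>weyl_mult_bound X Y. scale (weyl_mult X Y g r) (mu g r x))
       = (\<Sum>(a, s)\<in>wsupp X. \<Sum>(b, t)\<in>wsupp Y. scale (X a s * Y b t) (mu_mult a s b t x))"
proof -
  let ?T = "weyl_mult_bound X Y"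
  have "(\<Sum>(g, r)\<in>?T. scale (weyl_mult X Y g r) (mu g r x))
      = (\<Sum>(g, r)\<in>?T. \<Sum>(a, s)\<in>wsupp X. \<Sum>(b, t)\<in>wsupp Y.
           scale (X a s * Y b t) (scale (weyl_coeff a s b t g r) (mu g r x)))"
    by (simp add: weyl_mult_def scale_sum_left case_prod_unfold)
  also have "\<dots> = (\<Sum>(a, s)\<in>wsupp X. \<Sum>(b, t)\<in>wsupp Y.
           scale (X a s * Y b t) (\<Sum>(g, r)\<in>?T. scale (weyl_coeff a s b t g r) (mu g r x)))"
    unfolding scale_sum_right case_prod_unfold
    by (subst sum.swap, rule sum.cong[OF refl], subst sum.swap, rule refl)
  also have "\<dots> = (\<Sum>(a, s)\<in>wsupp X. \<Sum>(b, t)\<in>wsupp Y. scale (X a s * Y b t) (mu_mult a s b t x))"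
    using assms
    by (auto intro!: sum.cong simp: sum_weyl_coeff_mu finite_weyl_mult_bound box_subset_weyl_mult_bound)
  finally show ?thesis .
qed

lemma weyl_act_weyl_bracket:
  assumes "finite (wsupp X)" and "finite (wsupp Y)"
  shows "weyl_act scale mu (weyl_bracket X Y) x
    = (\<Sum>(a, s)\<in>wsupp X. \<Sum>(b, t)\<in>wsupp Y.
         scale (X a s * Y b t) (mu_mult a s b t x - mu_mult b t a s x))"
proof -
  let ?T = "weyl_mult_bound X Y"
  have "weyl_act scale mu (weyl_bracket X Y) x
      = (\<Sum>(g, r)\<in>?T. scale (weyl_bracket X Y g r) (mu g r x))"
    using assms by (simp add: weyl_act_eq_sum finite_weyl_mult_bound wsupp_weyl_bracket_subset)
  also have "\<dots> = (\<Sum>(g, r)\<in>?T. scale (weyl_mult X Y g r) (mu g r x))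
      - (\<Sum>(g, r)\<in>weyl_mult_bound Y X. scale (weyl_mult Y X g r) (mu g r x))"
    by (simp add: weyl_bracket_def weyl_mult_bound_commute scale_left_diff_distrib
        sum_subtractf case_prod_unfold)
  also have "\<dots> = (\<Sum>(a, s)\<in>wsupp X. \<Sum>(b, t)\<in>wsupp Y. scale (X a s * Y b t) (mu_mult a s b t x))
      - (\<Sum>(b, t)\<in>wsupp Y. \<Sum>(a, s)\<in>wsupp X. scale (Y b t * X a s) (mu_mult b t a s x))"
    using assms by (simp add: sum_weyl_mult_mu)
  also have "(\<Sum>(b, t)\<in>wsupp Y. \<Sum>(a, s)\<in>wsupp X. scale (Y b t * X a s) (mu_mult b t a s x))
      = (\<Sum>(a, s)\<in>wsupp X. \<Sum>(b, t)\<in>wsupp Y. scale (X a s * Y b t) (mu_mult b t a s x))"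
    unfolding case_prod_unfold by (subst sum.swap) (simp add: mult.commute)
  finally show ?thesis
    by (simp add: case_prod_unfold sum_subtractf scale_right_diff_distrib)
qed

lemma weyl_act_weyl_monomial: "weyl_act scale mu (weyl_monomial a s) x = mu a s x"
  unfolding weyl_act_def wsupp_weyl_monomial by (simp add: weyl_monomial_def)

lemma weyl_act_weyl_act:
  "weyl_act scale mu X (weyl_act scale mu Y x)
     = (\<Sum>(a, s)\<in>wsupp X. \<Sum>(b, t)\<in>wsupp Y. scale (X a s * Y b t) (mu a s (mu b t x)))"
  unfolding weyl_act_def by (simp add: mu_sum mu_scale scale_sum_right case_prod_unfold)

lemma is_representation_iff_mu_commutator:
  "is_representation scale mu \<longleftrightarrow>
     (\<forall>a s b t x. mu a s (mu b t x) - mu b t (mu a s x) = mu_mult a s b t x - mu_mult b t a s x)"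
proof (intro iffI allI)
  fix a s b t x
  assume "is_representation scale mu"
  then have "weyl_act scale mu (weyl_bracket (weyl_monomial a s) (weyl_monomial b t)) x
      = mu a s (mu b t x) - mu b t (mu a s x)"
    by (simp add: is_representation_def wsupp_weyl_monomial weyl_act_weyl_monomial)
  moreover have "weyl_act scale mu (weyl_bracket (weyl_monomial a s) (weyl_monomial b t)) x
      = mu_mult a s b t x - mu_mult b t a s x"
    by (simp add: weyl_act_weyl_bracket wsupp_weyl_monomial, simp add: weyl_monomial_def)
  ultimately show "mu a s (mu b t x) - mu b t (mu a s x) = mu_mult a s b t x - mu_mult b t a s x"
    by simp
next
  assume commutator: "\<forall>a s b t x.
    mu a s (mu b t x) - mu b t (mu a s x) = mu_mult a s b t x - mu_mult b t a s x"
  show "is_representation scale mu"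
    unfolding is_representation_def
  proof (intro allI impI)
    fix X Y :: "'n mi \<Rightarrow> 'n mi \<Rightarrow> 'k" and x
    assume "finite (wsupp X)" and "finite (wsupp Y)"
    then have "weyl_act scale mu (weyl_bracket X Y) x
       = (\<Sum>(a, s)\<in>wsupp X. \<Sum>(b, t)\<in>wsupp Y.
            scale (X a s * Y b t) (mu a s (mu b t x) - mu b t (mu a s x)))"
      using commutator by (simp add: weyl_act_weyl_bracket)
    also have "\<dots> = (\<Sum>(a, s)\<in>wsupp X. \<Sum>(b, t)\<in>wsupp Y. scale (X a s * Y b t) (mu a s (mu b t x)))
        - (\<Sum>(b, t)\<in>wsupp Y. \<Sum>(a, s)\<in>wsupp X. scale (Y b t * X a s) (mu b t (mu a s x)))"
      unfolding case_prod_unfold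
      by (subst (2) sum.swap) (simp add: scale_right_diff_distrib sum_subtractf mult.commute)
    also have "\<dots> = weyl_act scale mu X (weyl_act scale mu Y x)
        - weyl_act scale mu Y (weyl_act scale mu X x)"
      by (simp add: weyl_act_weyl_act)
    finally show "weyl_act scale mu (weyl_bracket X Y) x
        = weyl_act scale mu X (weyl_act scale mu Y x) - weyl_act scale mu Y (weyl_act scale mu X x)" .
  qed
qed

lemma amap_eq_sum:
  assumes "finite T" and "{a. F a \<noteq> 0} \<subseteq> T"
  shows "amap mu F s = (\<Sum>a\<in>T. mu a s (F a))"
  unfolding amap_def using assms by (intro sum.mono_neutral_left) auto

lemma a1_a2_eq:
  assumes "finite {(a, b). F a b \<noteq> 0}"
  shows "a1 mu (a2 mu F) r l = (\<Sum>(a, b)\<in>{(a, b). F a b \<noteq> 0}. mu a r (mu b l (F a b)))"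
proof -
  define S where "S = {(a, b). F a b \<noteq> 0}"
  have fin: "finite (fst ` S)" "finite (snd ` S)"
    using assms by (simp_all add: S_def)
  have a2_F: "a2 mu F a l = (\<Sum>b\<in>snd ` S. mu b l (F a b))" for a
    unfolding a2_def by (rule amap_eq_sum[OF fin(2)]) (force simp: S_def)
  have "a1 mu (a2 mu F) r l = amap mu (\<lambda>a. a2 mu F a l) r"
    by (simp add: a1_def a2_def swap12_def)
  also have "\<dots> = (\<Sum>a\<in>fst ` S. mu a r (a2 mu F a l))"
  proof (rule amap_eq_sum[OF fin(1)], rule subsetI, rule ccontr)
    fix a assume "a \<in> {a. a2 mu F a l \<noteq> 0}" "a \<notin> fst ` S"
    moreover from \<open>a \<notin> fst ` S\<close> have "F a b = 0" for b
      by (force simp: S_def)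
    ultimately show False
      by (simp add: a2_F)
  qed
  also have "\<dots> = (\<Sum>(a, b)\<in>fst ` S \<times> snd ` S. mu a r (mu b l (F a b)))"
    by (simp add: a2_F mu_sum sum.cartesian_product)
  also have "\<dots> = (\<Sum>(a, b)\<in>S. mu a r (mu b l (F a b)))"
    using fin by (intro sum.mono_neutral_right) (auto simp: S_def image_iff)
  finally show ?thesis
    unfolding S_def .
qed

lemma a2_a1_eq:
  assumes "finite {(a, b). F a b \<noteq> 0}"
  shows "a2 mu (a1 mu F) r l = (\<Sum>(a, b)\<in>{(a, b). F a b \<noteq> 0}. mu b l (mu a r (F a b)))"
proof -
  have "a2 mu (a1 mu F) r l = a1 mu (a2 mu (swap12 F)) l r"
    by (simp add: a1_def swap12_def)
  also have "\<dots> = (\<Sum>(a, b)\<in>{(a, b). swap12 F a b \<noteq> 0}. mu a l (mu b r (swap12 F a b)))"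
    using finite_support_swap12[OF assms] by (rule a1_a2_eq)
  also have "\<dots> = (\<Sum>(a, b)\<in>{(a, b). F a b \<noteq> 0}. mu b l (mu a r (F a b)))"
    by (rule sum_support_swap12)
  finally show ?thesis .
qed

lemma comm_a1a2_eq:
  assumes "finite {(a, b). F a b \<noteq> 0}"
  shows "comm_a1a2 mu F r l
    = (\<Sum>(a, b)\<in>{(a, b). F a b \<noteq> 0}. mu a r (mu b l (F a b)) - mu b l (mu a r (F a b)))"
  using assms
  by (simp add: comm_a1a2_def a1_a2_eq a2_a1_eq sum_subtractf case_prod_unfold)

lemma id_mS_id_DeltaS_eq:
  assumes "finite {(a, b). F a b \<noteq> 0}"
  shows "id_mS_id (swap12_3 (id_DeltaS_id scale F)) e g
    = (\<Sum>(a, b)\<in>{(a, b). F a b \<noteq> 0}.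
         if a + b - e = g then scale (of_nat (mbinom b e)) (F a b) else 0)"
proof -
  define S where "S = {(a, b). F a b \<noteq> 0}"
  define B where "B = {(a, b). e \<le> b \<and> a + b - e = g}"
  define f where "f p = scale (of_nat (mbinom (snd p) e)) (F (fst p) (snd p))" for p
  have shift_image: "(\<lambda>(a, d). (a, e + d)) ` {(a, d). a + d = g} = B"
  proof safe
    fix a b assume "(a, b) \<in> B"
    then have "(a, b - e) \<in> {(a, d). a + d = g}" and "b = e + (b - e)"
      by (auto simp: B_def fun_eq_iff le_fun_def)
    then show "(a, b) \<in> (\<lambda>(a, d). (a, e + d)) ` {(a, d). a + d = g}"
      by (metis (lifting) case_prod_conv image_eqI)
  qed (auto simp: B_def le_fun_def fun_eq_iff)
  have "id_mS_id (swap12_3 (id_DeltaS_id scale F)) e g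
      = (\<Sum>(a, d)\<in>{(a, d). a + d = g}. f (a, e + d))"
    by (simp add: id_mS_id_def swap12_3_def id_DeltaS_id_def madd_eq_plus f_def)
  also have "\<dots> = sum f B"
    unfolding shift_image[symmetric]
    by (subst sum.reindex) (auto simp: inj_on_def case_prod_unfold)
  also have "\<dots> = sum f (S \<inter> B)"
    using finite_plus_eq_mi shift_image
    by (intro sum.mono_neutral_right) (auto simp: S_def f_def)
  also have "\<dots> = (\<Sum>p\<in>S. if p \<in> B then f p else 0)"
    using assms by (simp add: S_def sum.inter_restrict)
  also have "\<dots> = (\<Sum>(a, b)\<in>S. if a + b - e = g then scale (of_nat (mbinom b e)) (F a b) else 0)"
  proof (rule sum.cong[OF refl], goal_cases)
    case (1 p)
    obtain a b where "p = (a, b)"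
      by fastforce
    then show ?case
      by (cases "e \<le> b") (auto simp: B_def f_def mbinom_eq_0 split: if_splits)
  qed
  finally show ?thesis
    unfolding S_def .
qed

lemma a2_id_mS_id_DeltaS_eq:
  assumes "finite {(a, b). F a b \<noteq> 0}"
  shows "a2 mu (id_mS_id (swap12_3 (id_DeltaS_id scale F))) e \<rho>
    = (\<Sum>(a, b)\<in>{(a, b). F a b \<noteq> 0}. scale (of_nat (mbinom b e)) (mu (a + b - e) \<rho> (F a b)))"
proof -
  define S where "S = {(a, b). F a b \<noteq> 0}"
  define T where "T = (\<lambda>(a, b). a + b - e) ` S"
  let ?H = "id_mS_id (swap12_3 (id_DeltaS_id scale F)) e"
  have H: "?H g = (\<Sum>(a, b)\<in>S. if a + b - e = g then scale (of_nat (mbinom b e)) (F a b) else 0)" for g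
    unfolding S_def using assms by (rule id_mS_id_DeltaS_eq)
  have "{g. ?H g \<noteq> 0} \<subseteq> T"
    by (auto simp: H T_def elim!: sum.not_neutral_contains_not_neutral split: if_splits)
  then have "a2 mu (id_mS_id (swap12_3 (id_DeltaS_id scale F))) e \<rho> = (\<Sum>g\<in>T. mu g \<rho> (?H g))"
    unfolding a2_def using assms
    by (intro amap_eq_sum) (simp_all add: T_def S_def)
  also have "\<dots> = (\<Sum>g\<in>T. \<Sum>(a, b)\<in>S.
      if a + b - e = g then scale (of_nat (mbinom b e)) (mu g \<rho> (F a b)) else 0)"
    by (simp add: H mu_sum mu_scale case_prod_unfold if_distrib[of "mu _ _"] cong: if_cong)
  also have "\<dots> = (\<Sum>(a, b)\<in>S. \<Sum>g\<in>T.
      if a + b - e = g then scale (of_nat (mbinom b e)) (mu g \<rho> (F a b)) else 0)"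
    unfolding case_prod_unfold by (rule sum.swap)
  also have "\<dots> = (\<Sum>(a, b)\<in>S. scale (of_nat (mbinom b e)) (mu (a + b - e) \<rho> (F a b)))"
    using assms by (intro sum.cong refl) (auto simp: T_def S_def)
  finally show ?thesis
    unfolding S_def .
qed

lemma a_prime_eq:
  assumes "finite {(a, b). F a b \<noteq> 0}"
  shows "a_prime scale mu F r l = (\<Sum>(a, b)\<in>{(a, b). F a b \<noteq> 0}. mu_mult a r b l (F a b))"
proof -
  define S where "S = {(a, b). F a b \<noteq> 0}"
  let ?K = "a2 mu (id_mS_id (swap12_3 (id_DeltaS_id scale F)))"
  have "a_prime scale mu F r l = (\<Sum>(e, v)\<in>{(e, v). e + v = r}.
      scale (of_nat (mbinom r e)) (scale (of_nat (mfact e)) (?K e (v + l))))"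
    by (simp add: a_prime_def mD_id_id_def avg_id_def id_DeltaD_id_def madd_eq_plus)
  also have "\<dots> = (\<Sum>e\<in>{..r}. scale (of_nat (mbinom r e)) (scale (of_nat (mfact e)) (?K e (r + l - e))))"
    by (rule sum.reindex_bij_witness[where j = fst and i = "\<lambda>e. (e, r - e)"])
      (auto simp: mi_add_eq_iff mi_diff_add_assoc)
  also have "\<dots> = (\<Sum>e\<in>{..r}. \<Sum>(a, b)\<in>S.
      scale (of_nat (mfact e * mbinom r e * mbinom b e)) (mu (a + b - e) (r + l - e) (F a b)))"
    using assms
    by (simp add: a2_id_mS_id_DeltaS_eq S_def scale_sum_right case_prod_unfold mult_ac)
  also have "\<dots> = (\<Sum>(a, b)\<in>S. mu_mult a r b l (F a b))"
    unfolding mu_mult_def case_prod_unfold by (rule sum.swap)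
  finally show ?thesis
    unfolding S_def .
qed

lemma a_dprime_eq:
  assumes "finite {(a, b). F a b \<noteq> 0}"
  shows "a_dprime scale mu F r l = (\<Sum>(a, b)\<in>{(a, b). F a b \<noteq> 0}. mu_mult b l a r (F a b))"
proof -
  have "a_dprime scale mu F r l = a_prime scale mu (swap12 F) l r"
    by (simp add: a_dprime_def swap12_def)
  also have "\<dots> = (\<Sum>(a, b)\<in>{(a, b). swap12 F a b \<noteq> 0}. mu_mult a l b r (swap12 F a b))"
    using finite_support_swap12[OF assms] by (rule a_prime_eq)
  also have "\<dots> = (\<Sum>(a, b)\<in>{(a, b). F a b \<noteq> 0}. mu_mult b l a r (F a b))"
    by (rule sum_support_swap12)
  finally show ?thesis .
qed

lemma comm_a1a2_eq_iff_mu_commutator: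
  "(\<forall>F :: 'n mi \<Rightarrow> 'n mi \<Rightarrow> 'm. finite {(a, b). F a b \<noteq> 0} \<longrightarrow>
      (\<forall>r l. comm_a1a2 mu F r l = a_prime scale mu F r l - a_dprime scale mu F r l))
   \<longleftrightarrow> (\<forall>a s b t x. mu a s (mu b t x) - mu b t (mu a s x) = mu_mult a s b t x - mu_mult b t a s x)"
proof (intro iffI allI impI)
  fix a s b t :: "'n mi" and x :: 'm
  assume identity: "\<forall>F :: 'n mi \<Rightarrow> 'n mi \<Rightarrow> 'm. finite {(a, b). F a b \<noteq> 0} \<longrightarrow>
      (\<forall>r l. comm_a1a2 mu F r l = a_prime scale mu F r l - a_dprime scale mu F r l)"
  define F where "F a' b' = (if a' = a \<and> b' = b then x else 0)" for a' b'
  show "mu a s (mu b t x) - mu b t (mu a s x) = mu_mult a s b t x - mu_mult b t a s x"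
  proof (cases "x = 0")
    case False
    then have "{(a', b'). F a' b' \<noteq> 0} = {(a, b)}"
      by (auto simp: F_def)
    then show ?thesis
      using identity[rule_format, of F s t]
      by (simp add: comm_a1a2_eq a_prime_eq a_dprime_eq F_def)
  qed simp
next
  fix F :: "'n mi \<Rightarrow> 'n mi \<Rightarrow> 'm" and r l
  assume "\<forall>a s b t x. mu a s (mu b t x) - mu b t (mu a s x) = mu_mult a s b t x - mu_mult b t a s x"
    and "finite {(a, b). F a b \<noteq> 0}"
  then show "comm_a1a2 mu F r l = a_prime scale mu F r l - a_dprime scale mu F r l"
    by (simp add: comm_a1a2_eq a_prime_eq a_dprime_eq sum_subtractf[symmetric] case_prod_unfold)
qed

end

theorem proposition7p1:
  fixes scale :: "'k::field \<Rightarrow> 'm::ab_group_add \<Rightarrow> 'm"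
    and mu :: "('n::finite \<Rightarrow> nat) \<Rightarrow> ('n \<Rightarrow> nat) \<Rightarrow> 'm \<Rightarrow> 'm"
  assumes "vector_space scale"
    and "\<forall>a s. Vector_Spaces.linear scale scale (mu a s)"
    and "\<forall>a x. finite {s. mu a s x \<noteq> 0}"
  shows "is_representation scale mu \<longleftrightarrow>
    (\<forall>F :: ('n \<Rightarrow> nat) \<Rightarrow> ('n \<Rightarrow> nat) \<Rightarrow> 'm. finite {(a, b). F a b \<noteq> 0} \<longrightarrow>
       (\<forall>r l. comm_a1a2 mu F r l = a_prime scale mu F r l - a_dprime scale mu F r l))"
proof -
  interpret weyl_action scale mu
    using assms(1,2) by (simp add: weyl_action_def weyl_action_axioms_def)
  show ?thesis
    by (simp only: is_representation_iff_mu_commutator comm_a1a2_eq_iff_mu_commutator)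
qed

end
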